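(* Let $W$ be a channel from $\{1,2,3\}$ to $\{1,2\}$. If the six entries $W_{i,j}$ are pairwise distinct and each column sum of $W$ is at least $1$, then $\overline{C}_{01}(W)<\overline{C}_{11}(W)$.
   Context: A channel is a row-stochastic matrix. With $\mathcal{X}=\{1,2,3\}$, $\mathcal{Y}=\{1,2\}$, a deterministic channel is a 0-1 channel (a map $D:\mathcal{X}\to\mathcal{Y}$); $\mathcal{D}$ is the set of them, $\mathrm{rank}(D)$ the matrix rank. $\Lambda(W)=\{\lambda\text{ probability distribution on }\mathcal{D}: W=\sum_D\lambda_DD\}$. $I(\mu,K)=\sum_x\mu_xD(K_{x,*}\|\mu K)$ (KL divergence, base 2). $C_{11}(\lambda)=\sum_D\lambda_D\log_2\mathrm{rank}(D)$, $C_{01}(\lambda)=\max_\mu\sum_D\lambda_D I(\mu,D)$ over distributions $\mu$ on $\mathcal{X}$. $\overline{C}_f(W)=\sup_{\lambda\in\Lambda(W)}C_f(\lambda)$ for $f\in\{01,11\}$. *)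

theory Defs
  imports "HOL-Analysis.Analysis"
begin

text \<open>Input alphabet X = {1,2,3} is the type 3, output alphabet Y = {1,2} is the type 2.
  A channel is a row-stochastic real matrix of type real^2^3 (rows indexed by inputs).\<close>

definition channel :: "real^2^3 \<Rightarrow> bool" where
  "channel W \<longleftrightarrow> (\<forall>x y. W$x$y \<ge> 0) \<and> (\<forall>x. (\<Sum>y\<in>UNIV. W$x$y) = 1)"

definition det_channels :: "(real^2^3) set" where
  "det_channels = {D. channel D \<and> (\<forall>x y. D$x$y = 0 \<or> D$x$y = 1)}"

definition Lambda :: "real^2^3 \<Rightarrow> ((real^2^3) \<Rightarrow> real) set" where
  "Lambda W = {l. (\<forall>D. l D \<ge> 0) \<and> (\<forall>D. D \<notin> det_channels \<longrightarrow> l D = 0)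
      \<and> (\<Sum>D\<in>det_channels. l D) = 1
      \<and> W = (\<Sum>D\<in>det_channels. l D *\<^sub>R D)}"

definition input_dists :: "(real^3) set" where
  "input_dists = {\<mu>. (\<forall>x. \<mu>$x \<ge> 0) \<and> (\<Sum>x\<in>UNIV. \<mu>$x) = 1}"

definition out_dist :: "real^3 \<Rightarrow> real^2^3 \<Rightarrow> real^2" where
  "out_dist \<mu> K = (\<chi> y. \<Sum>x\<in>UNIV. \<mu>$x * K$x$y)"

definition KL :: "real^2 \<Rightarrow> real^2 \<Rightarrow> real" where
  "KL p q = (\<Sum>y\<in>UNIV. if p$y = 0 then 0 else p$y * log 2 (p$y / q$y))"

definition mutual_info :: "real^3 \<Rightarrow> real^2^3 \<Rightarrow> real" where
  "mutual_info \<mu> K = (\<Sum>x\<in>UNIV. if \<mu>$x = 0 then 0 else \<mu>$x * KL (K$x) (out_dist \<mu> K))"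

definition C11 :: "((real^2^3) \<Rightarrow> real) \<Rightarrow> real" where
  "C11 l = (\<Sum>D\<in>det_channels. l D * log 2 (real (rank D)))"

text \<open>The maximum over mu is attained (compact simplex, continuous objective); we write it as Sup.\<close>
definition C01 :: "((real^2^3) \<Rightarrow> real) \<Rightarrow> real" where
  "C01 l = (SUP \<mu>\<in>input_dists. \<Sum>D\<in>det_channels. l D * mutual_info \<mu> D)"

definition C11_bar :: "real^2^3 \<Rightarrow> real" where
  "C11_bar W = (SUP l\<in>Lambda W. C11 l)"

definition C01_bar :: "real^2^3 \<Rightarrow> real" where
  "C01_bar W = (SUP l\<in>Lambda W. C01 l)"

end

theory Submission
  imports Defs
begin

text \<open>
  Index the eight deterministic channels by the maps \<open>f :: 3 \<Rightarrow> 2\<close>. The mutual information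
  of a deterministic channel is the entropy of its output distribution \<open>q\<close>, which is at most
  \<open>1 - (q\<^sub>1 - q\<^sub>2)\<^sup>2/4\<close>. Whatever the input distribution, some pair of inputs
  \<open>j \<noteq> k\<close> carries mass at least \<open>2/3\<close>, so every map with \<open>f j = f k\<close> has
  \<open>(q\<^sub>1 - q\<^sub>2)\<^sup>2 \<ge> 1/9\<close>; and in any decomposition of \<open>W\<close> these maps carry weight at
  least \<open>\<bar>W\<^sub>j\<^sub>1 + W\<^sub>k\<^sub>1 - 1\<bar>\<close>, which is positive because the entries of \<open>W\<close> are
  distinct. Hence \<open>C\<^sub>0\<^sub>1\<close> stays below \<open>1 - \<delta>/36\<close> uniformly. On the other hand
  \<open>rank D \<le> 2\<close> gives \<open>C\<^sub>1\<^sub>1 \<le> 1\<close>, and the column sum condition is exactly what allows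
  a decomposition of \<open>W\<close> avoiding the two constant maps, so the supremum of
  \<open>C\<^sub>1\<^sub>1\<close> is \<open>1\<close>.
\<close>

definition det_channel :: "(3 \<Rightarrow> 2) \<Rightarrow> real^2^3" where
  "det_channel f = (\<chi> x y. if f x = y then 1 else 0)"

lemma det_channel_nth [simp]: "det_channel f $ x $ y = (if f x = y then 1 else 0)"
  by (simp add: det_channel_def)

lemma inj_det_channel: "inj det_channel"
proof
  fix f g assume "det_channel f = det_channel g"
  then have "det_channel f $ x $ f x = det_channel g $ x $ f x" for x by simp
  then show "f = g" by (metis det_channel_nth ext zero_neq_one)
qed

lemma det_channels_eq_range: "det_channels = range det_channel"
proof
  show "det_channels \<subseteq> range det_channel"
  proof
    fix D assume D: "D \<in> det_channels"
    define f where "f x = (if D$x$1 = 1 then 1 else 2 :: 2)" for x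
    have "D$x = det_channel f $ x" for x
      using D[unfolded det_channels_def channel_def]
      by (auto simp: vec_eq_iff forall_2 sum_2 f_def) (metis add_cancel_right_left)+
    then show "D \<in> range det_channel" by (auto simp: vec_eq_iff)
  qed
  show "range det_channel \<subseteq> det_channels"
    by (auto simp: det_channels_def channel_def)
qed

lemma finite_det_channels: "finite det_channels"
  by (simp add: det_channels_eq_range)

lemma det_channel_in_det_channels: "det_channel f \<in> det_channels"
  by (simp add: det_channels_eq_range)

lemma sum_det_channels: "(\<Sum>D\<in>det_channels. g D) = (\<Sum>f\<in>UNIV. g (det_channel f))"
  by (simp add: det_channels_eq_range sum.reindex inj_det_channel)

lemma Lambda_weights:
  assumes "l \<in> Lambda W"
  shows "0 \<le> l (det_channel f)" "(\<Sum>f\<in>UNIV. l (det_channel f)) = 1"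
    "W$x$y = (\<Sum>f\<in>UNIV. l (det_channel f) * (if f x = y then 1 else 0))"
proof -
  show "0 \<le> l (det_channel f)" "(\<Sum>f\<in>UNIV. l (det_channel f)) = 1"
    using assms by (simp_all add: Lambda_def sum_det_channels)
  have "W = (\<Sum>f\<in>UNIV. l (det_channel f) *\<^sub>R det_channel f)"
    using assms by (simp add: Lambda_def sum_det_channels)
  then show "W$x$y = (\<Sum>f\<in>UNIV. l (det_channel f) * (if f x = y then 1 else 0))"
    by simp
qed

lemma out_dist_nonneg: "\<mu> \<in> input_dists \<Longrightarrow> channel K \<Longrightarrow> 0 \<le> out_dist \<mu> K $ y"
  by (auto simp: out_dist_def input_dists_def channel_def intro: sum_nonneg)

lemma sum_out_dist: "\<mu> \<in> input_dists \<Longrightarrow> channel K \<Longrightarrow> (\<Sum>y\<in>UNIV. out_dist \<mu> K $ y) = 1"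
  by (simp add: out_dist_def input_dists_def channel_def sum.swap[of _ UNIV] flip: sum_distrib_left)

lemma out_dist_det_channel: "out_dist \<mu> (det_channel f) $ y = (\<Sum>x | f x = y. \<mu>$x)"
  by (simp add: out_dist_def if_distrib sum.If_cases)

lemma mult_ln_inverse_le:
  fixes p :: real
  assumes "0 \<le> p"
  shows "p * ln (1 / p) \<le> p * ln 2 + sqrt (2 * p) - 2 * p"
proof (cases "p = 0")
  case False
  define c where "c = sqrt (2 * p)"
  have "p > 0" "c > 0" "c^2 = 2 * p" using assms False by (auto simp: c_def)
  then have "1 / p = 2 * (1 / c)^2" by (simp add: field_simps power2_eq_square)
  then have "ln (1 / p) = ln 2 + 2 * ln (1 / c)"
    using \<open>c > 0\<close> by (simp add: ln_mult ln_realpow)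
  also have "\<dots> \<le> ln 2 + 2 * (1 / c - 1)"
    using \<open>c > 0\<close> ln_le_minus_one[of "1 / c"] by simp
  finally have "p * ln (1 / p) \<le> p * (ln 2 + 2 * (1 / c - 1))"
    using \<open>p > 0\<close> by (simp add: mult_left_mono)
  also have "\<dots> = p * ln 2 + c - 2 * p"
    using \<open>c > 0\<close> \<open>c^2 = 2 * p\<close> by (simp add: field_simps power2_eq_square)
  finally show ?thesis unfolding c_def .
qed simp

lemma diff_square_le_sqrt_deficit:
  fixes a b :: real
  assumes "0 \<le> a" "0 \<le> b" "a + b = 1"
  shows "(a - b)^2 / 4 \<le> 2 - sqrt (2 * a) - sqrt (2 * b)"
proof -
  define u where "u = sqrt (2 * a)"
  define v where "v = sqrt (2 * b)"
  have u: "u \<ge> 0" "u^2 = 2 * a" and v: "v \<ge> 0" "v^2 = 2 * b"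
    using assms by (auto simp: u_def v_def)
  have parallelogram: "(u + v)^2 + (u - v)^2 = 2 * (u^2 + v^2)"
    by (simp add: power2_eq_square algebra_simps)
  have uv: "u^2 + v^2 = 2"
    using u v assms by simp
  have "(u + v)^2 \<le> 4"
    using parallelogram zero_le_power2[of "u - v"] unfolding uv by linarith
  then have "u + v \<le> 2"
    using power2_le_imp_le[of "u + v" 2] by simp
  have "(u - v)^2 = 4 - (u + v)^2"
    using parallelogram unfolding uv by linarith
  also have "\<dots> = (2 - u - v) * (2 + u + v)"
    by (simp add: power2_eq_square algebra_simps)
  also have "\<dots> \<le> (2 - u - v) * 4"
    using \<open>u + v \<le> 2\<close> u v by (intro mult_left_mono) auto
  finally have deficit: "(u - v)^2 \<le> 4 * (2 - u - v)" by simp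
  have "u^2 - v^2 = 2 * (a - b)"
    using u v by simp
  then have "4 * (a - b)^2 = (u^2 - v^2)^2"
    by (simp only: power_mult_distrib) simp
  also have "\<dots> = (u - v)^2 * (u + v)^2"
    by (simp add: power2_eq_square algebra_simps)
  also have "\<dots> \<le> (u - v)^2 * 4"
    using \<open>(u + v)^2 \<le> 4\<close> by (intro mult_left_mono) auto
  finally show ?thesis using deficit by (simp add: u_def v_def)
qed

definition shannon_entropy :: "real^2 \<Rightarrow> real" where
  "shannon_entropy q = (\<Sum>y\<in>UNIV. q$y * log 2 (1 / q$y))"

lemma shannon_entropy_le:
  assumes "0 \<le> q$1" "0 \<le> q$2" "q$1 + q$2 = 1"
  shows "shannon_entropy q \<le> 1 - (q$1 - q$2)^2 / 4"
proof -
  define X where "X = 2 - sqrt (2 * q$1) - sqrt (2 * q$2)"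
  have X: "(q$1 - q$2)^2 / 4 \<le> X"
    unfolding X_def using assms by (rule diff_square_le_sqrt_deficit)
  then have "0 \<le> X"
    using zero_le_power2[of "q$1 - q$2"] by linarith
  have ln2: "0 < ln (2::real)" "ln (2::real) \<le> 1"
    using ln_le_minus_one[of 2] by auto
  have "ln 2 * shannon_entropy q = q$1 * ln (1 / q$1) + q$2 * ln (1 / q$2)"
    using ln2 by (simp add: shannon_entropy_def sum_2 log_def field_simps)
  also have "\<dots> \<le> (q$1 + q$2) * ln 2 + sqrt (2 * q$1) + sqrt (2 * q$2) - 2 * (q$1 + q$2)"
    using mult_ln_inverse_le[OF assms(1)] mult_ln_inverse_le[OF assms(2)]
    by (simp add: algebra_simps)
  also have "\<dots> = ln 2 - X"
    using assms(3) by (simp add: X_def)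
  also have "\<dots> \<le> ln 2 * (1 - X)"
    using ln2 \<open>0 \<le> X\<close> by (simp add: algebra_simps mult_left_le)
  finally have "shannon_entropy q \<le> 1 - X"
    using ln2 by simp
  then show ?thesis using X by linarith
qed

lemma mutual_info_det_channel:
  "mutual_info \<mu> (det_channel f) = shannon_entropy (out_dist \<mu> (det_channel f))"
proof -
  define q where "q = out_dist \<mu> (det_channel f)"
  have "KL (det_channel f $ x) q = (\<Sum>y\<in>UNIV. if f x = y then log 2 (1 / q $ y) else 0)" for x
    unfolding KL_def by (rule sum.cong) auto
  then have KL: "KL (det_channel f $ x) q = log 2 (1 / q $ f x)" for x
    by simp
  have "mutual_info \<mu> (det_channel f) = (\<Sum>x\<in>UNIV. \<mu>$x * log 2 (1 / q $ f x))"
    unfolding mutual_info_def q_def[symmetric] KL by (rule sum.cong) auto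
  also have "\<dots> = (\<Sum>y\<in>UNIV. \<Sum>x | f x = y. \<mu>$x * log 2 (1 / q $ y))"
    using sum.group[of UNIV UNIV f "\<lambda>x. \<mu>$x * log 2 (1 / q $ f x)"] by simp
  also have "\<dots> = shannon_entropy q"
    by (simp add: shannon_entropy_def q_def out_dist_det_channel sum_distrib_right)
  finally show ?thesis by (simp add: q_def)
qed

lemma abs_column_pair_sum_le:
  assumes "l \<in> Lambda W"
  shows "\<bar>W$j$1 + W$k$1 - 1\<bar> \<le> (\<Sum>f\<in>UNIV. l (det_channel f) * (if f j = f k then 1 else 0))"
proof -
  define s :: "(3 \<Rightarrow> 2) \<Rightarrow> real" where
    "s f = (if f j = 1 then 1 else 0) + (if f k = 1 then 1 else 0) - 1" for f
  have "\<bar>s f\<bar> = (if f j = f k then 1 else 0)" for f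
    using exhaust_2[of "f j"] exhaust_2[of "f k"] by (auto simp: s_def)
  have "W$j$1 + W$k$1 - 1 = (\<Sum>f\<in>UNIV. l (det_channel f) * s f)"
    using Lambda_weights[OF assms]
    by (simp add: s_def algebra_simps sum.distrib sum_subtractf)
  also have "\<bar>\<dots>\<bar> \<le> (\<Sum>f\<in>UNIV. l (det_channel f) * \<bar>s f\<bar>)"
    using sum_abs[of "\<lambda>f. l (det_channel f) * s f" UNIV] Lambda_weights(1)[OF assms]
    by (simp add: abs_mult)
  finally show ?thesis using \<open>\<And>f. \<bar>s f\<bar> = _\<close> by simp
qed

lemma exists_heavy_pair:
  assumes "\<mu> \<in> input_dists"
  obtains j k :: 3 where "j \<noteq> k" "2/3 \<le> \<mu>$j + \<mu>$k"
proof -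
  have "\<mu>$1 + \<mu>$2 + \<mu>$3 = 1"
    using assms by (simp add: input_dists_def sum_3)
  then have "2/3 \<le> \<mu>$1 + \<mu>$2 \<or> 2/3 \<le> \<mu>$1 + \<mu>$3 \<or> 2/3 \<le> \<mu>$2 + \<mu>$3"
    by linarith
  then show ?thesis
    using that[of 1 2] that[of 1 3] that[of 2 3] by auto
qed

lemma merged_pair_output_bias:
  assumes "\<mu> \<in> input_dists" "j \<noteq> k" "2/3 \<le> \<mu>$j + \<mu>$k" "f j = f k"
  defines "q \<equiv> out_dist \<mu> (det_channel f)"
  shows "1/9 \<le> (q$1 - q$2)^2"
proof -
  have ch: "channel (det_channel f)"
    using det_channel_in_det_channels by (simp add: det_channels_def)
  have "\<mu>$j + \<mu>$k = (\<Sum>x\<in>{j, k}. \<mu>$x)"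
    using assms(2) by simp
  also have "\<dots> \<le> q $ f j"
    unfolding q_def out_dist_det_channel using assms(1,4)
    by (intro sum_mono2) (auto simp: input_dists_def)
  finally have heavy: "2/3 \<le> q $ f j" using assms(3) by linarith
  have "q$1 + q$2 = 1" "0 \<le> q$1" "0 \<le> q$2"
    using sum_out_dist[OF assms(1) ch] out_dist_nonneg[OF assms(1) ch] by (simp_all add: q_def sum_2)
  then have "1/3 \<le> \<bar>q$1 - q$2\<bar>"
    using heavy exhaust_2[of "f j"] by auto
  then have "(1/3)^2 \<le> \<bar>q$1 - q$2\<bar>^2"
    by (rule power_mono) simp
  then show ?thesis by (simp add: power2_eq_square)
qed

lemma weighted_output_bias_ge:
  assumes l: "l \<in> Lambda W" and \<mu>: "\<mu> \<in> input_dists"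
    and \<delta>: "\<forall>j k. j \<noteq> k \<longrightarrow> \<delta> \<le> \<bar>W$j$1 + W$k$1 - 1\<bar>"
  defines "q f \<equiv> out_dist \<mu> (det_channel f)"
  shows "\<delta> / 9 \<le> (\<Sum>f\<in>UNIV. l (det_channel f) * (q f $ 1 - q f $ 2)^2)"
proof -
  obtain j k where jk: "j \<noteq> k" "2/3 \<le> \<mu>$j + \<mu>$k"
    using exists_heavy_pair[OF \<mu>] .
  have "(if f j = f k then 1 else 0) \<le> 9 * (q f $ 1 - q f $ 2)^2" for f
    using merged_pair_output_bias[OF \<mu> jk, of f] by (simp add: q_def mult.commute)
  then have "(\<Sum>f\<in>UNIV. l (det_channel f) * (if f j = f k then 1 else 0))
      \<le> (\<Sum>f\<in>UNIV. l (det_channel f) * (9 * (q f $ 1 - q f $ 2)^2))"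
    by (intro sum_mono mult_left_mono Lambda_weights(1)[OF l])
  then have "\<bar>W$j$1 + W$k$1 - 1\<bar> \<le> 9 * (\<Sum>f\<in>UNIV. l (det_channel f) * (q f $ 1 - q f $ 2)^2)"
    using abs_column_pair_sum_le[OF l, of j k] by (simp add: sum_distrib_left algebra_simps)
  then show ?thesis using \<delta> jk(1) by fastforce
qed

lemma C01_le:
  assumes l: "l \<in> Lambda W"
    and \<delta>: "\<forall>j k. j \<noteq> k \<longrightarrow> \<delta> \<le> \<bar>W$j$1 + W$k$1 - 1\<bar>"
  shows "C01 l \<le> 1 - \<delta> / 36"
  unfolding C01_def
proof (rule cSUP_least)
  have "(\<chi> x. if x = 1 then 1 else 0) \<in> input_dists"
    by (simp add: input_dists_def sum_3)
  then show "input_dists \<noteq> {}" by blast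
next
  fix \<mu> assume \<mu>: "\<mu> \<in> input_dists"
  define q where "q f = out_dist \<mu> (det_channel f)" for f
  have ch: "channel (det_channel f)" for f
    using det_channel_in_det_channels by (simp add: det_channels_def)
  have "(\<Sum>D\<in>det_channels. l D * mutual_info \<mu> D)
      = (\<Sum>f\<in>UNIV. l (det_channel f) * shannon_entropy (q f))"
    by (simp add: sum_det_channels mutual_info_det_channel q_def)
  also have "\<dots> \<le> (\<Sum>f\<in>UNIV. l (det_channel f) * (1 - (q f $ 1 - q f $ 2)^2 / 4))"
    using sum_out_dist[OF \<mu> ch] out_dist_nonneg[OF \<mu> ch]
    by (intro sum_mono mult_left_mono Lambda_weights(1)[OF l] shannon_entropy_le)
       (simp_all add: q_def sum_2)
  also have "\<dots> = 1 - (\<Sum>f\<in>UNIV. l (det_channel f) * (q f $ 1 - q f $ 2)^2) / 4"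
    using Lambda_weights(2)[OF l]
    by (simp add: algebra_simps sum_subtractf sum_divide_distrib)
  also have "\<dots> \<le> 1 - \<delta> / 36"
    using weighted_output_bias_ge[OF l \<mu> \<delta>] by (simp add: q_def)
  finally show "(\<Sum>D\<in>det_channels. l D * mutual_info \<mu> D) \<le> 1 - \<delta> / 36" .
qed

lemma det_channel_mult_vec: "det_channel f *v v = (\<chi> x. v $ f x)"
  by (simp add: vec_eq_iff matrix_vector_mult_def if_distrib[of "\<lambda>c. c * _"] cong: if_cong)

lemma rank_det_channel:
  assumes "surj f"
  shows "rank (det_channel f) = 2"
proof -
  have "inj ((*v) (det_channel f))"
  proof
    fix v w :: "real^2"
    assume "det_channel f *v v = det_channel f *v w"
    then have "v $ f x = w $ f x" for x
      by (simp add: det_channel_mult_vec vec_eq_iff)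
    then show "v = w"
      using assms by (metis surjD vec_eq_iff)
  qed
  then show ?thesis
    using full_rank_injective[of "det_channel f"] by simp
qed

lemma log_rank_le_1: "log 2 (real (rank (A :: real^2^'n))) \<le> 1"
proof -
  have "rank A \<le> 2"
    using rank_bound[of A] by simp
  then have "rank A = 0 \<or> rank A = 1 \<or> rank A = 2"
    by linarith
  then show ?thesis by (auto simp: log_def)
qed

lemma C11_le_1:
  assumes "l \<in> Lambda W"
  shows "C11 l \<le> 1"
proof -
  have "C11 l \<le> (\<Sum>f\<in>UNIV. l (det_channel f))"
    unfolding C11_def sum_det_channels
    by (intro sum_mono mult_left_le log_rank_le_1 Lambda_weights(1)[OF assms])
  then show ?thesis
    using Lambda_weights(2)[OF assms] by simp
qed

lemma exists_pair_weights:
  fixes a :: "3 \<Rightarrow> real"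
  assumes "\<And>x. 0 \<le> a x" "\<And>x. a x \<le> 1" "1 \<le> sum a UNIV" "sum a UNIV \<le> 2"
  obtains w where "\<And>x. 0 \<le> w x" "\<And>x. sum a UNIV - 1 - a x \<le> w x"
    "sum w UNIV = sum a UNIV - 1"
proof -
  define T where "T = sum a UNIV - 1"
  define r where "r x = max 0 (T - a x)" for x
  have "sum r UNIV \<le> T"
    using assms(1,2)[of 1] assms(1,2)[of 2] assms(1,2)[of 3] assms(3,4)
    by (simp add: sum_3 r_def T_def max_def)
  define e where "e = (T - sum r UNIV) / 3"
  define w where "w x = r x + e" for x
  have "0 \<le> r x" "T - a x \<le> r x" for x
    by (simp_all add: r_def)
  then have "0 \<le> w x" "T - a x \<le> w x" for x
    using \<open>sum r UNIV \<le> T\<close> by (simp_all add: w_def e_def add_increasing2)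
  moreover have "sum w UNIV = T"
    by (simp add: w_def e_def sum.distrib diff_divide_distrib)
  ultimately show ?thesis
    using that unfolding T_def by blast
qed

definition to_1_only_at :: "3 \<Rightarrow> 3 \<Rightarrow> 2" where
  "to_1_only_at i x = (if x = i then 1 else 2)"

definition to_2_only_at :: "3 \<Rightarrow> 3 \<Rightarrow> 2" where
  "to_2_only_at i x = (if x = i then 2 else 1)"

lemma exists_other: "\<exists>x :: 3. x \<noteq> i"
  using exhaust_3[of i] by (metis one_neq_zero zero_neq_numeral)

lemma surj_to_1_only_at: "surj (to_1_only_at i)"
  and surj_to_2_only_at: "surj (to_2_only_at i)"
  unfolding surj_def to_1_only_at_def to_2_only_at_def
  using exists_other[of i] exhaust_2 by metis+

lemma sum_point_masses:
  fixes X :: "'i::finite \<Rightarrow> 'a" and c :: "'i \<Rightarrow> real"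
  assumes "finite S" "range X \<subseteq> S"
  shows "(\<Sum>D\<in>S. (\<Sum>i\<in>UNIV. if D = X i then c i else 0) * g D) = (\<Sum>i\<in>UNIV. c i * g (X i))"
proof -
  have "(\<Sum>D\<in>S. (\<Sum>i\<in>UNIV. if D = X i then c i else 0) * g D)
      = (\<Sum>i\<in>UNIV. \<Sum>D\<in>S. if D = X i then c i * g (X i) else 0)"
    by (simp add: sum_distrib_right sum.swap[of _ S] if_distrib[of "\<lambda>c. c * _"] cong: if_cong)
  also have "\<dots> = (\<Sum>i\<in>UNIV. c i * g (X i))"
    using assms by (simp add: subset_iff)
  finally show ?thesis .
qed

lemma exists_Lambda_C11_eq_1:
  assumes W: "channel W" and cols: "\<forall>y. 1 \<le> (\<Sum>x\<in>UNIV. W$x$y)"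
  obtains l where "l \<in> Lambda W" "C11 l = 1"
proof -
  define a where "a x = W$x$1" for x
  have row_sum: "W$x$1 + W$x$2 = 1" and nonneg: "0 \<le> W$x$y" for x y
    using W by (simp_all add: channel_def sum_2)
  have row: "W$x$2 = 1 - a x" "0 \<le> a x" "a x \<le> 1" for x
    using row_sum[of x] nonneg[of x 1] nonneg[of x 2] unfolding a_def by linarith+
  have "1 \<le> sum a UNIV" "sum a UNIV \<le> 2"
    using cols[rule_format, of 1] cols[rule_format, of 2] by (simp_all add: a_def row(1) sum_3)
  then obtain w where w: "\<And>x. 0 \<le> w x" "\<And>x. sum a UNIV - 1 - a x \<le> w x"
      "sum w UNIV = sum a UNIV - 1"
    using exists_pair_weights row(2,3) by metis
  \<comment> \<open>\<open>w i\<close> weighs the map sending only \<open>i\<close> to output 2, \<open>v i\<close> the map sending only \<open>i\<close>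
    to output 1; the lower bound on \<open>w\<close> is what makes \<open>v\<close> nonnegative.\<close>
  define v where "v x = a x - (sum a UNIV - 1) + w x" for x
  have v: "0 \<le> v x" for x
    using w(2)[of x] by (simp add: v_def)
  define l where "l D = (\<Sum>i\<in>UNIV. if D = det_channel (to_2_only_at i) then w i else 0)
      + (\<Sum>i\<in>UNIV. if D = det_channel (to_1_only_at i) then v i else 0)" for D
  have expand: "(\<Sum>D\<in>det_channels. l D * g D) = (\<Sum>i\<in>UNIV. w i * g (det_channel (to_2_only_at i)))
      + (\<Sum>i\<in>UNIV. v i * g (det_channel (to_1_only_at i)))" for g
    unfolding l_def distrib_right sum.distrib
    by (simp add: sum_point_masses finite_det_channels det_channel_in_det_channels image_subset_iff)
  have "l \<in> Lambda W"
    unfolding Lambda_def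
  proof (intro CollectI conjI allI impI)
    show "0 \<le> l D" for D
      using w(1) v by (simp add: l_def sum_nonneg)
    show "l D = 0" if "D \<notin> det_channels" for D
    proof -
      have "D \<noteq> det_channel f" for f
        using that det_channel_in_det_channels by blast
      then show ?thesis by (simp add: l_def)
    qed
    show "(\<Sum>D\<in>det_channels. l D) = 1"
      using expand[of "\<lambda>_. 1"] w(3) by (simp add: v_def sum.distrib sum_3)
    show "W = (\<Sum>D\<in>det_channels. l D *\<^sub>R D)"
    proof (simp add: vec_eq_iff, intro allI)
      fix x y
      show "W$x$y = (\<Sum>D\<in>det_channels. l D * D$x$y)"
        unfolding expand using w(3) row(1) exhaust_3[of x] exhaust_2[of y]
        by (auto simp: to_1_only_at_def to_2_only_at_def v_def a_def sum_3)
    qed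
  qed
  moreover have "C11 l = 1"
    using expand[of "\<lambda>D. log 2 (real (rank D))"] w(3)
    by (simp add: C11_def rank_det_channel surj_to_1_only_at surj_to_2_only_at v_def sum.distrib sum_3)
  ultimately show ?thesis using that by blast
qed

lemma C11_bar_eq_1:
  assumes "channel W" "\<forall>y. 1 \<le> (\<Sum>x\<in>UNIV. W$x$y)"
  shows "C11_bar W = 1"
proof -
  obtain l where l: "l \<in> Lambda W" "C11 l = 1"
    using exists_Lambda_C11_eq_1[OF assms] .
  have "C11_bar W \<le> 1"
    unfolding C11_bar_def using l(1) C11_le_1 by (intro cSUP_least) auto
  moreover have "bdd_above (C11 ` Lambda W)"
    using C11_le_1 by (intro bdd_aboveI2) blast
  then have "1 \<le> C11_bar W"
    unfolding C11_bar_def using l by (intro cSUP_upper2[of _ _ l]) auto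
  ultimately show ?thesis by simp
qed

theorem proposition24:
  fixes W :: "real^2^3"
  assumes "channel W"
    and "\<forall>x y x' y'. W$x$y = W$x'$y' \<longrightarrow> x = x' \<and> y = y'"
    and "\<forall>y. (\<Sum>x\<in>UNIV. W$x$y) \<ge> 1"
  shows "C01_bar W < C11_bar W"
proof -
  define \<delta> where "\<delta> = Min (range (\<lambda>(j, k). \<bar>W$j$1 + W$k$1 - 1\<bar>))"
  have "W$j$1 + W$k$1 \<noteq> 1" for j k
  proof
    assume "W$j$1 + W$k$1 = 1"
    moreover have "W$k$1 + W$k$2 = 1"
      using assms(1) by (simp add: channel_def sum_2)
    ultimately have "W$j$1 = W$k$2" by linarith
    from assms(2)[rule_format, OF this] show False by simp
  qed
  then have "0 < \<delta>"
    unfolding \<delta>_def by (subst Min_gr_iff) auto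
  have "\<delta> \<le> \<bar>W$j$1 + W$k$1 - 1\<bar>" for j k
    unfolding \<delta>_def by (rule Min_le) (auto intro: rev_image_eqI[of "(j, k)"])
  then have \<delta>_le: "\<forall>j k. j \<noteq> k \<longrightarrow> \<delta> \<le> \<bar>W$j$1 + W$k$1 - 1\<bar>"
    by blast
  obtain l where "l \<in> Lambda W"
    using exists_Lambda_C11_eq_1[OF assms(1,3)] by metis
  then have "C01_bar W \<le> 1 - \<delta> / 36"
    unfolding C01_bar_def using C01_le[OF _ \<delta>_le] by (intro cSUP_least) auto
  also have "\<dots> < C11_bar W"
    using C11_bar_eq_1[OF assms(1,3)] \<open>0 < \<delta>\<close> by simp
  finally show ?thesis .
qed

end
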